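(* For every $T>0$, $$\sup_{t\in[-\tau,T]}|Y^N(t)-Y^N(t^-)|\to0$$ in probability as $N\to\infty$, where $Y^N(t^-)$ denotes the left limit.
   Context: Model. Fix $\tau>0$, $\mu\ge 0$, $N\in\mathbb N$, and write $L=\lfloor \tau N\rfloor$. The state space is $\Omega_N=[0,\infty)^{L+1}$, with elements $x=(x_{-L},\dots,x_0)$. Define $\theta_N^\pm:\Omega_N\to\Omega_N$ by $(\theta_N^\pm x)_j=x_{j+1}$ for $-L\le j<0$, $(\theta_N^+x)_0=x_0(1+\frac1N)$, $(\theta_N^-x)_0=\max\{x_0(1-\frac{x_{-L}}{N^2}),0\}$. Let $\xi^N=(\xi^N(n))_{n\ge0}$ be the discrete-time Markov chain on $\Omega_N$ moving from $x$ to $\theta_N^+x$ or $\theta_N^-x$ with probability $1/2$ each, with $\xi^N_j(0)=\mu N$ for all $j$. Let $(\sigma_n)_{n\ge1}$ be i.i.d. Exp(1), independent of $\xi^N$, $J_0=0$, $J_n=\sigma_1+\dots+\sigma_n$, and $X^N(t)=\xi^N(n)$ for $t\in[J_n,J_{n+1})$. Define $Y^N(t)=X^N_{-L}(N(t+\tau))/N$ for $t\in[-\tau,0)$ and $Y^N(t)=X^N_0(Nt)/N$ for $t\ge0$. *)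

theory Defs
  imports "HOL-Probability.Probability"
begin

definition Lval :: "real \<Rightarrow> nat \<Rightarrow> nat" where
  "Lval \<tau> N = nat \<lfloor>\<tau> * real N\<rfloor>"

(* States x = (x_{-L},...,x_0) are represented as int \<Rightarrow> real; only indices -L..0 matter. *)
definition theta_plus :: "nat \<Rightarrow> nat \<Rightarrow> (int \<Rightarrow> real) \<Rightarrow> (int \<Rightarrow> real)" where
  "theta_plus L N x = (\<lambda>j. if - int L \<le> j \<and> j < 0 then x (j + 1)
      else if j = 0 then x 0 * (1 + 1 / real N) else x j)"

definition theta_minus :: "nat \<Rightarrow> nat \<Rightarrow> (int \<Rightarrow> real) \<Rightarrow> (int \<Rightarrow> real)" where
  "theta_minus L N x = (\<lambda>j. if - int L \<le> j \<and> j < 0 then x (j + 1)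
      else if j = 0 then max (x 0 * (1 - x (- int L) / (real N)^2)) 0 else x j)"

primrec xi :: "real \<Rightarrow> real \<Rightarrow> nat \<Rightarrow> (nat \<Rightarrow> bool) \<Rightarrow> nat \<Rightarrow> (int \<Rightarrow> real)" where
  "xi \<tau> \<mu> N c 0 = (\<lambda>j. \<mu> * real N)"
| "xi \<tau> \<mu> N c (Suc n) =
     (if c n then theta_plus (Lval \<tau> N) N (xi \<tau> \<mu> N c n)
      else theta_minus (Lval \<tau> N) N (xi \<tau> \<mu> N c n))"

(* J_k = sigma_1 + ... + sigma_k, with sigma_{i+1} = s i *)
definition Jt :: "(nat \<Rightarrow> real) \<Rightarrow> nat \<Rightarrow> real" where
  "Jt s k = (\<Sum>i<k. s i)"

(* X^N(t) = xi^N(n) for t in [J_n, J_{n+1}); n = #{k \<ge> 1. J_k \<le> t} *)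
definition Xproc :: "real \<Rightarrow> real \<Rightarrow> nat \<Rightarrow> (nat \<Rightarrow> bool) \<Rightarrow> (nat \<Rightarrow> real) \<Rightarrow> real \<Rightarrow> (int \<Rightarrow> real)" where
  "Xproc \<tau> \<mu> N c s t = xi \<tau> \<mu> N c (card {k. 1 \<le> k \<and> Jt s k \<le> t})"

definition Yproc :: "real \<Rightarrow> real \<Rightarrow> nat \<Rightarrow> (nat \<Rightarrow> bool) \<Rightarrow> (nat \<Rightarrow> real) \<Rightarrow> real \<Rightarrow> real" where
  "Yproc \<tau> \<mu> N c s t =
     (if t < 0 then Xproc \<tau> \<mu> N c s (real N * (t + \<tau>)) (- int (Lval \<tau> N)) / real N
      else Xproc \<tau> \<mu> N c s (real N * t) 0 / real N)"

definition jump_size :: "(real \<Rightarrow> real) \<Rightarrow> real \<Rightarrow> real" where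
  "jump_size f t = \<bar>f t - Lim (at_left t) f\<bar>"

end

(*
  Between arrivals of the exponential clocks Y is constant, and a single step of the chain changes
  every coordinate by at most B + B^2 with B = mu (1 + 1/N)^m during the first m steps, so away from
  t = 0 the jumps of Y are at most (B + B^2) / N. At t = 0, Y switches from the delayed coordinate
  xi_{-L} to xi_0 of the same state, which differ by at most (B + B^2) times the number of
  arrivals before time N tau in excess of L. By Chebyshev's inequality for the Erlang distributed
  arrival times, with probability 1 - O(1/N) at most 2 N (T + tau) + 1 arrivals happen before time
  N (T + tau), and at most L + delta N before time N tau; then every jump is below epsilon.

  The event has to be measurable for every outcome, also when clocks are not positive or arrival
  times accumulate. This is achieved by computing the left limit of the counting step function
  explicitly for an arbitrary sequence of arrival times and by restricting the supremum to
  countably many candidate jump times.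
*)
theory Submission
  imports Defs
begin

section \<open>Left limits of counting step functions\<close>

definition arrivals_until :: "(nat \<Rightarrow> real) \<Rightarrow> real \<Rightarrow> nat set" where
  "arrivals_until J x = {k. 1 \<le> k \<and> J k \<le> x}"

definition arrivals_before :: "(nat \<Rightarrow> real) \<Rightarrow> real \<Rightarrow> nat set" where
  "arrivals_before J x = {k. 1 \<le> k \<and> J k < x}"

lemma arrivals_until_mono: "x \<le> y \<Longrightarrow> arrivals_until J x \<subseteq> arrivals_until J y"
  by (auto simp: arrivals_until_def)

lemma arrivals_until_subset_before: "x < y \<Longrightarrow> arrivals_until J x \<subseteq> arrivals_before J y"
  by (auto simp: arrivals_until_def arrivals_before_def)

lemma arrivals_before_subset_until: "arrivals_before J x \<subseteq> arrivals_until J x"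
  by (auto simp: arrivals_until_def arrivals_before_def)

lemma tendsto_count_at_left_finite:
  assumes fin: "finite (arrivals_before J u)"
  shows "((\<lambda>x. h (card (arrivals_until J x))) \<longlongrightarrow> h (card (arrivals_before J u))) (at_left u)"
proof -
  define m where "m = Max (insert (u - 1) (J ` arrivals_before J u))"
  have J_le_m: "J k \<le> m" if "k \<in> arrivals_before J u" for k
    using fin that by (auto simp: m_def)
  have "m < u"
    using fin by (auto simp: m_def arrivals_before_def)
  then have "\<forall>\<^sub>F x in at_left u. arrivals_until J x = arrivals_before J u"
  proof (rule eventually_at_left_real[THEN eventually_mono], safe)
    fix x k assume "x \<in> {m<..<u}"
    then show "k \<in> arrivals_until J x \<Longrightarrow> k \<in> arrivals_before J u"
      and "k \<in> arrivals_before J u \<Longrightarrow> k \<in> arrivals_until J x"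
      using arrivals_until_subset_before[of x u J] J_le_m[of k]
      by (auto simp: arrivals_until_def arrivals_before_def)
  qed
  then have "\<forall>\<^sub>F x in at_left u. h (card (arrivals_until J x)) = h (card (arrivals_before J u))"
    by (rule eventually_mono) simp
  then show ?thesis
    by (rule tendsto_eventually)
qed

lemma tendsto_count_at_left_infinite:
  assumes "x0 < u" and inf: "infinite (arrivals_until J x0)"
  shows "((\<lambda>x. h (card (arrivals_until J x))) \<longlongrightarrow> h 0) (at_left u)"
proof (rule tendsto_eventually)
  show "\<forall>\<^sub>F x in at_left u. h (card (arrivals_until J x)) = h 0"
    using eventually_at_left_real[OF \<open>x0 < u\<close>]
  proof eventually_elim
    case (elim x)
    then have "infinite (arrivals_until J x)"
      using inf arrivals_until_mono[of x0 x J] finite_subset by auto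
    then show ?case by simp
  qed
qed

text \<open>As this step
  function only changes at arrival times, rational points and arrival times suffice as witnesses,
  which keeps the predicate measurable in \<open>J\<close>.\<close>
definition count_value_below :: "(nat \<Rightarrow> real) \<Rightarrow> real \<Rightarrow> nat \<Rightarrow> bool" where
  "count_value_below J u n \<longleftrightarrow>
     (\<exists>q::rat. of_rat q < u \<and> card (arrivals_until J (of_rat q)) = n) \<or>
     (\<exists>k. 1 \<le> k \<and> J k < u \<and> card (arrivals_until J (J k)) = n)"

definition next_count_value :: "(nat \<Rightarrow> real) \<Rightarrow> real \<Rightarrow> nat \<Rightarrow> nat" where
  "next_count_value J u m = (LEAST n. count_value_below J u n \<and> m \<le> n)"

lemma count_value_below_iff:
  assumes fin: "\<And>x. x < u \<Longrightarrow> finite (arrivals_until J x)"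
  shows "count_value_below J u n \<longleftrightarrow> (\<exists>x<u. card (arrivals_until J x) = n)"
proof
  assume "count_value_below J u n"
  then show "\<exists>x<u. card (arrivals_until J x) = n"
    unfolding count_value_below_def by auto
next
  assume "\<exists>x<u. card (arrivals_until J x) = n"
  then obtain x where x: "x < u" "card (arrivals_until J x) = n" by blast
  show "count_value_below J u n"
  proof (cases "arrivals_until J x = {}")
    case True
    obtain q :: rat where q: "x - 1 < of_rat q" "of_rat q < x"
      using of_rat_dense[of "x - 1" x] by auto
    then have "arrivals_until J (of_rat q) = {}"
      using True arrivals_until_mono[of "of_rat q" x J] by auto
    then show ?thesis
      using True q x unfolding count_value_below_def by (intro disjI1 exI[of _ q]) auto
  next
    case False
    have fx: "finite (arrivals_until J x)" using fin x(1) .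
    have "Max (J ` arrivals_until J x) \<in> J ` arrivals_until J x"
      using False fx by (intro Max_in) auto
    then obtain k where k: "k \<in> arrivals_until J x" "J k = Max (J ` arrivals_until J x)"
      by auto
    have "J k' \<le> J k" if "k' \<in> arrivals_until J x" for k'
      using k(2) Max_ge[of "J ` arrivals_until J x" "J k'"] fx that by simp
    then have "arrivals_until J (J k) = arrivals_until J x"
      using k(1) by (auto simp: arrivals_until_def)
    moreover have "1 \<le> k" "J k < u"
      using k(1) x(1) by (auto simp: arrivals_until_def)
    ultimately show ?thesis
      using x(2) unfolding count_value_below_def by (intro disjI2 exI[of _ k]) simp
  qed
qed

lemma card_arrivals_until_unbounded_at_left:
  assumes inf: "infinite (arrivals_before J u)"
    and fin: "\<And>x. x < u \<Longrightarrow> finite (arrivals_until J x)"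
  shows "\<exists>x<u. B < card (arrivals_until J x)"
proof -
  obtain F where F: "F \<subseteq> arrivals_before J u" "finite F" "card F = Suc B"
    using infinite_arbitrarily_large[OF inf] by blast
  define x where "x = Max (J ` F)"
  have "x \<in> J ` F"
    unfolding x_def using F by (intro Max_in) auto
  then have "x < u"
    using F by (auto simp: arrivals_before_def)
  moreover have "F \<subseteq> arrivals_until J x"
    using F by (auto simp: arrivals_until_def arrivals_before_def x_def)
  then have "card F \<le> card (arrivals_until J x)"
    using fin[OF \<open>x < u\<close>] by (rule card_mono[rotated])
  ultimately show ?thesis
    using F by auto
qed

lemma next_count_value_attained:
  assumes inf: "infinite (arrivals_before J u)"
    and fin: "\<And>x. x < u \<Longrightarrow> finite (arrivals_until J x)"
  shows "(\<exists>x<u. card (arrivals_until J x) = next_count_value J u m) \<and> m \<le> next_count_value J u m"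
proof -
  obtain x where "x < u" "m < card (arrivals_until J x)"
    using card_arrivals_until_unbounded_at_left[OF inf fin] by blast
  then have "\<exists>n. count_value_below J u n \<and> m \<le> n"
    using count_value_below_iff[OF fin] by (intro exI[of _ "card (arrivals_until J x)"]) auto
  from LeastI_ex[OF this] show ?thesis
    unfolding next_count_value_def using count_value_below_iff[OF fin] by blast
qed

lemma next_count_value_card:
  assumes fin: "\<And>x. x < u \<Longrightarrow> finite (arrivals_until J x)" and "x < u"
  shows "next_count_value J u (card (arrivals_until J x)) = card (arrivals_until J x)"
  unfolding next_count_value_def using assms(2) count_value_below_iff[OF fin]
  by (intro Least_equality) auto

lemma tendsto_count_at_left_iff_sequentially:
  fixes h :: "nat \<Rightarrow> 'a::metric_space"
  assumes inf: "infinite (arrivals_before J u)"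
    and fin: "\<And>x. x < u \<Longrightarrow> finite (arrivals_until J x)"
  shows "((\<lambda>x. h (card (arrivals_until J x))) \<longlongrightarrow> l) (at_left u) \<longleftrightarrow>
    ((\<lambda>m. h (next_count_value J u m)) \<longlonglongrightarrow> l)"
proof
  define K where "K x = card (arrivals_until J x)" for x
  have K_mono: "K x \<le> K y" if "x \<le> y" "y < u" for x y
    unfolding K_def using that fin by (intro card_mono arrivals_until_mono) auto
  assume lim: "((\<lambda>x. h (card (arrivals_until J x))) \<longlongrightarrow> l) (at_left u)"
  obtain z where z: "\<And>m. z m < u" "\<And>m. K (z m) = next_count_value J u m"
    using next_count_value_attained[OF inf fin] unfolding K_def by metis
  have "z \<longlonglongrightarrow> u"
  proof (rule tendstoI)
    fix e :: real assume "0 < e"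
    have z_close: "u - e < z m" if "Suc (K (u - e)) \<le> m" for m
    proof (rule ccontr)
      assume "\<not> u - e < z m"
      then have "K (z m) \<le> K (u - e)"
        using K_mono \<open>0 < e\<close> by simp
      then show False
        using z(2)[of m] next_count_value_attained[OF inf fin, of m] that by simp
    qed
    have "dist (z m) u < e" if "Suc (K (u - e)) \<le> m" for m
      using z_close[OF that] z(1)[of m] by (simp add: dist_real_def)
    then show "\<forall>\<^sub>F m in sequentially. dist (z m) u < e"
      unfolding eventually_sequentially by blast
  qed
  then have "filterlim z (at_left u) sequentially"
    using z(1) by (auto simp: filterlim_at less_imp_neq intro!: always_eventually)
  from filterlim_compose[OF lim this] show "(\<lambda>m. h (next_count_value J u m)) \<longlonglongrightarrow> l"
    using z(2) by (simp add: K_def)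
next
  assume lim: "(\<lambda>m. h (next_count_value J u m)) \<longlonglongrightarrow> l"
  show "((\<lambda>x. h (card (arrivals_until J x))) \<longlongrightarrow> l) (at_left u)"
  proof (rule tendstoI)
    fix e :: real assume "0 < e"
    then obtain M where M: "\<And>m. M \<le> m \<Longrightarrow> dist (h (next_count_value J u m)) l < e"
      using lim unfolding tendsto_iff eventually_sequentially by blast
    obtain x0 where x0: "x0 < u" "M < card (arrivals_until J x0)"
      using card_arrivals_until_unbounded_at_left[OF inf fin] by blast
    show "\<forall>\<^sub>F x in at_left u. dist (h (card (arrivals_until J x))) l < e"
      using eventually_at_left_real[OF x0(1)]
    proof eventually_elim
      case (elim x)
      then have "x < u" "card (arrivals_until J x0) \<le> card (arrivals_until J x)"
        using fin by (auto intro!: card_mono arrivals_until_mono)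
      then show ?case
        using M[of "card (arrivals_until J x)"] next_count_value_card[OF fin \<open>x < u\<close>] x0 by auto
    qed
  qed
qed

text \<open>Using \<open>lim\<close> in the last branch makes it agree with
  \<open>Lim\<close> even when the left limit does not exist: both are then \<open>THE l. False\<close>.\<close>
definition left_limit_count :: "(nat \<Rightarrow> real) \<Rightarrow> (nat \<Rightarrow> 'a::metric_space) \<Rightarrow> real \<Rightarrow> 'a" where
  "left_limit_count J h u =
    (if finite (arrivals_before J u) then h (card (arrivals_before J u))
     else if \<exists>q::rat. of_rat q < u \<and> infinite (arrivals_until J (of_rat q)) then h 0
     else lim (\<lambda>m. h (next_count_value J u m)))"

lemma Lim_at_left_count:
  "Lim (at_left u) (\<lambda>x. h (card (arrivals_until J x))) = left_limit_count J h u"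
proof -
  consider (finite) "finite (arrivals_before J u)"
    | (exploded) q :: rat where "of_rat q < u" "infinite (arrivals_until J (of_rat q))"
    | (exploding) "infinite (arrivals_before J u)"
        "\<forall>q::rat. of_rat q < u \<longrightarrow> finite (arrivals_until J (of_rat q))"
    by blast
  then show ?thesis
  proof cases
    case finite
    then show ?thesis
      unfolding left_limit_count_def
      by (simp add: tendsto_Lim[OF trivial_limit_at_left_real tendsto_count_at_left_finite])
  next
    case exploded
    then have "infinite (arrivals_before J u)"
      using arrivals_until_subset_before[of "of_rat q" u J] finite_subset by blast
    then show ?thesis
      unfolding left_limit_count_def
      using exploded tendsto_Lim[OF trivial_limit_at_left_real tendsto_count_at_left_infinite[OF exploded]]
      by auto
  next
    case exploding
    have fin: "finite (arrivals_until J x)" if "x < u" for x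
    proof -
      obtain q :: rat where q: "x < of_rat q" "of_rat q < u"
        using of_rat_dense[OF \<open>x < u\<close>] by blast
      then show ?thesis
        using exploding(2) arrivals_until_mono[of x "of_rat q" J] finite_subset by auto
    qed
    have "Lim (at_left u) (\<lambda>x. h (card (arrivals_until J x))) = lim (\<lambda>m. h (next_count_value J u m))"
      unfolding t2_space_class.Lim_def lim_def
      using tendsto_count_at_left_iff_sequentially[OF exploding(1) fin, of h] by presburger
    then show ?thesis
      unfolding left_limit_count_def using exploding by auto
  qed
qed

lemma Lim_cong_eventually:
  "eventually (\<lambda>x. f x = g x) F \<Longrightarrow> Lim F f = Lim F g"
  unfolding t2_space_class.Lim_def by (simp add: tendsto_cong)

lemma filterlim_affine_at_left:
  fixes a b t :: real
  assumes "a > 0"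
  shows "filterlim (\<lambda>x. a * x + b) (at_left (a * t + b)) (at_left t)"
proof (subst filterlim_at, intro conjI)
  show "\<forall>\<^sub>F x in at_left t. a * x + b \<in> {..<a * t + b} \<and> a * x + b \<noteq> a * t + b"
    using assms by (simp add: eventually_at_filter)
  have "((\<lambda>x. a * x + b) \<longlongrightarrow> a * t + b) (at t)"
    by (intro tendsto_intros)
  then show "((\<lambda>x. a * x + b) \<longlongrightarrow> a * t + b) (at_left t)"
    by (rule tendsto_mono[rotated]) (simp add: at_le)
qed

lemma filtermap_affine_at_left:
  fixes a b t :: real
  assumes "a > 0"
  shows "filtermap (\<lambda>x. a * x + b) (at_left t) = at_left (a * t + b)"
proof (rule filtermap_fun_inverse[where g = "\<lambda>y. (1 / a) * y + (- b / a)"])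
  show "filterlim (\<lambda>y. (1 / a) * y + (- b / a)) (at_left t) (at_left (a * t + b))"
    using filterlim_affine_at_left[of "1 / a" "- b / a" "a * t + b"] assms
    by (simp add: field_simps)
  show "filterlim (\<lambda>x. a * x + b) (at_left (a * t + b)) (at_left t)"
    using assms by (rule filterlim_affine_at_left)
  show "\<forall>\<^sub>F y in at_left (a * t + b). a * ((1 / a) * y + (- b / a)) + b = y"
    using assms by (simp add: field_simps)
qed

lemma Lim_at_left_affine:
  fixes g :: "real \<Rightarrow> 'a::t2_space" and a b t :: real
  assumes "a > 0"
  shows "Lim (at_left t) (\<lambda>x. g (a * x + b)) = Lim (at_left (a * t + b)) g"
  unfolding t2_space_class.Lim_def
  using tendsto_compose_filtermap[of g "\<lambda>x. a * x + b"]
  by (simp add: comp_def filtermap_affine_at_left[OF assms])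

text \<open>Apart from the arrival times, this is the only point where
  \<open>\<lambda>x. card (arrivals_until J x)\<close> can fail to be left continuous.\<close>
definition explosion_time :: "(nat \<Rightarrow> real) \<Rightarrow> real" where
  "explosion_time J = real_of_ereal
     (INF q::rat. if infinite (arrivals_until J (of_rat q)) then ereal (of_rat q) else \<infinity>)"

lemma explosion_time_eqI:
  assumes inf: "infinite (arrivals_before J u)"
    and fin: "\<And>q::rat. of_rat q < u \<Longrightarrow> finite (arrivals_until J (of_rat q))"
  shows "explosion_time J = u"
proof -
  let ?f = "\<lambda>q::rat. if infinite (arrivals_until J (of_rat q)) then ereal (of_rat q) else \<infinity>"
  have "(INF q. ?f q) = ereal u"
  proof (rule antisym)
    show "ereal u \<le> (INF q. ?f q)"
    proof (rule INF_greatest)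
      fix q :: rat
      show "ereal u \<le> ?f q"
        using fin[of q] by (cases "of_rat q < u") auto
    qed
    show "(INF q. ?f q) \<le> ereal u"
    proof (rule dense_ge)
      fix y assume "ereal u < y"
      then obtain r where r: "ereal u < ereal r" "ereal r < y"
        using ereal_dense2 by blast
      then obtain q :: rat where q: "u < of_rat q" "of_rat q < r"
        using of_rat_dense[of u r] by auto
      have "arrivals_before J u \<subseteq> arrivals_until J (of_rat q)"
        using q(1) by (auto simp: arrivals_before_def arrivals_until_def)
      then have "infinite (arrivals_until J (of_rat q))"
        using inf finite_subset by blast
      then have "(INF q. ?f q) \<le> ereal (of_rat q)"
        using INF_lower[of q UNIV ?f] by simp
      also have "ereal (of_rat q) < ereal r"
        using q(2) by simp
      finally show "(INF q. ?f q) \<le> y"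
        using r(2) by simp
    qed
  qed
  then show ?thesis
    unfolding explosion_time_def by simp
qed

lemma left_limit_count_eq_current:
  assumes no_arrival: "\<And>k. 1 \<le> k \<Longrightarrow> J k \<noteq> u" and "explosion_time J \<noteq> u"
  shows "left_limit_count J h u = h (card (arrivals_until J u))"
proof -
  have "arrivals_until J u \<subseteq> arrivals_before J u"
  proof
    fix k assume "k \<in> arrivals_until J u"
    then have "1 \<le> k" "J k \<le> u"
      by (auto simp: arrivals_until_def)
    then show "k \<in> arrivals_before J u"
      using no_arrival[of k] by (simp add: arrivals_before_def)
  qed
  then have eq: "arrivals_before J u = arrivals_until J u"
    using arrivals_before_subset_until by blast
  consider (finite) "finite (arrivals_before J u)"
    | (exploded) q :: rat where "of_rat q < u" "infinite (arrivals_until J (of_rat q))"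
    | (exploding) "infinite (arrivals_before J u)"
        "\<forall>q::rat. of_rat q < u \<longrightarrow> finite (arrivals_until J (of_rat q))"
    by blast
  then show ?thesis
  proof cases
    case finite
    then show ?thesis
      unfolding left_limit_count_def eq by simp
  next
    case exploded
    then have "infinite (arrivals_until J u)"
      using arrivals_until_mono[of "of_rat q" u J] finite_subset by (meson less_imp_le)
    moreover have "\<exists>q::rat. of_rat q < u \<and> infinite (arrivals_until J (of_rat q))"
      using exploded by blast
    ultimately show ?thesis
      unfolding left_limit_count_def eq by simp
  next
    case exploding
    then have "explosion_time J = u"
      by (intro explosion_time_eqI) auto
    with \<open>explosion_time J \<noteq> u\<close> show ?thesis
      by contradiction
  qed
qed

section \<open>The left limit of \<open>Y\<close> and its possible jump times\<close>

definition scaled_xi :: "real \<Rightarrow> real \<Rightarrow> nat \<Rightarrow> (nat \<Rightarrow> bool) \<Rightarrow> int \<Rightarrow> nat \<Rightarrow> real" where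
  "scaled_xi \<tau> \<mu> N c j n = xi \<tau> \<mu> N c n j / real N"

lemma Yproc_eq_scaled_xi:
  "Yproc \<tau> \<mu> N c s t =
    (if t < 0
     then scaled_xi \<tau> \<mu> N c (- int (Lval \<tau> N)) (card (arrivals_until (Jt s) (real N * t + real N * \<tau>)))
     else scaled_xi \<tau> \<mu> N c 0 (card (arrivals_until (Jt s) (real N * t))))"
  unfolding Yproc_def Xproc_def scaled_xi_def arrivals_until_def by (simp add: algebra_simps)

lemma Lim_at_left_Yproc:
  assumes "N > 0"
  shows "Lim (at_left t) (Yproc \<tau> \<mu> N c s) =
    (if t \<le> 0
     then left_limit_count (Jt s) (scaled_xi \<tau> \<mu> N c (- int (Lval \<tau> N))) (real N * t + real N * \<tau>)
     else left_limit_count (Jt s) (scaled_xi \<tau> \<mu> N c 0) (real N * t))"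
proof (cases "t \<le> 0")
  case True
  let ?g = "\<lambda>u. scaled_xi \<tau> \<mu> N c (- int (Lval \<tau> N)) (card (arrivals_until (Jt s) u))"
  have "\<forall>\<^sub>F x in at_left t. Yproc \<tau> \<mu> N c s x = ?g (real N * x + real N * \<tau>)"
    using True by (auto simp: eventually_at_filter Yproc_eq_scaled_xi)
  then have "Lim (at_left t) (Yproc \<tau> \<mu> N c s) = Lim (at_left t) (\<lambda>x. ?g (real N * x + real N * \<tau>))"
    by (rule Lim_cong_eventually)
  also have "\<dots> = Lim (at_left (real N * t + real N * \<tau>)) ?g"
    using assms by (intro Lim_at_left_affine) simp
  finally show ?thesis
    using True by (simp add: Lim_at_left_count)
next
  case False
  let ?g = "\<lambda>u. scaled_xi \<tau> \<mu> N c 0 (card (arrivals_until (Jt s) u))"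
  have "\<forall>\<^sub>F x in at_left t. Yproc \<tau> \<mu> N c s x = ?g (real N * x + 0)"
    using eventually_at_left_real[of 0 t] False
    by (auto simp: Yproc_eq_scaled_xi elim: eventually_mono)
  then have "Lim (at_left t) (Yproc \<tau> \<mu> N c s) = Lim (at_left t) (\<lambda>x. ?g (real N * x + 0))"
    by (rule Lim_cong_eventually)
  also have "\<dots> = Lim (at_left (real N * t + 0)) ?g"
    using assms by (intro Lim_at_left_affine) simp
  finally show ?thesis
    using False by (simp add: Lim_at_left_count)
qed

text \<open>The points where \<open>Yproc \<tau> \<mu> N c (\<lambda>n. \<sigma> n \<omega>)\<close> can jump, enumerated so that each one
  is a measurable function of \<open>\<omega>\<close>: \<open>u / N\<close> and \<open>(u - N \<tau>) / N\<close> for an arrival time or the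
  explosion time \<open>u\<close>. Since \<open>Jt s 0 = 0\<close>, the time \<open>0\<close>, where the observed coordinate of the
  chain changes, is among them.\<close>
definition jump_candidate :: "real \<Rightarrow> nat \<Rightarrow> (nat \<Rightarrow> real) \<Rightarrow> bool \<times> nat option \<Rightarrow> real" where
  "jump_candidate \<tau> N J = (\<lambda>(delayed, k).
     ((case k of None \<Rightarrow> explosion_time J | Some n \<Rightarrow> J n) - (if delayed then real N * \<tau> else 0))
       / real N)"

lemma jump_size_Yproc_eq_0:
  assumes "N > 0" and t: "t \<notin> range (jump_candidate \<tau> N (Jt s))"
  shows "jump_size (Yproc \<tau> \<mu> N c s) t = 0"
proof -
  have candidate: "t \<noteq> (u - (if delayed then real N * \<tau> else 0)) / real N"
    if "u = explosion_time (Jt s) \<or> (\<exists>k. u = Jt s k)" for u delayed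
    using t that by (force simp: jump_candidate_def image_iff split: option.splits)
  have "t \<noteq> (Jt s 0 - 0) / real N"
    using candidate[of "Jt s 0" False] by auto
  then have "t \<noteq> 0"
    by (simp add: Jt_def)
  show ?thesis
  proof (cases "t < 0")
    case True
    define u where "u = real N * t + real N * \<tau>"
    have "t = (u - real N * \<tau>) / real N"
      using assms(1) by (simp add: u_def)
    then have "\<And>k. Jt s k \<noteq> u" "explosion_time (Jt s) \<noteq> u"
      using candidate[of _ True] by auto
    then show ?thesis
      unfolding jump_size_def Lim_at_left_Yproc[OF assms(1)]
      using True by (simp add: left_limit_count_eq_current Yproc_eq_scaled_xi u_def[symmetric])
  next
    case False
    define u where "u = real N * t"
    have "t = (u - 0) / real N"
      using assms(1) by (simp add: u_def)
    then have "\<And>k. Jt s k \<noteq> u" "explosion_time (Jt s) \<noteq> u"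
      using candidate[of _ False] by auto
    then show ?thesis
      unfolding jump_size_def Lim_at_left_Yproc[OF assms(1)]
      using False \<open>t \<noteq> 0\<close> by (simp add: left_limit_count_eq_current Yproc_eq_scaled_xi u_def[symmetric])
  qed
qed

section \<open>Measurability of the large-jump event\<close>

lemma measurable_left_limit_count:
  fixes J h :: "'a \<Rightarrow> nat \<Rightarrow> real" and u :: "'a \<Rightarrow> real"
  assumes [measurable]: "\<And>k. (\<lambda>x. J x k) \<in> borel_measurable M"
    "\<And>n. (\<lambda>x. h x n) \<in> borel_measurable M" "u \<in> borel_measurable M"
  shows "(\<lambda>x. left_limit_count (J x) (h x) (u x)) \<in> borel_measurable M"
proof -
  have h_at: "(\<lambda>x. h x (g x)) \<in> borel_measurable M" if "g \<in> M \<rightarrow>\<^sub>M count_space UNIV" for g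
    using measurable_compose_countable[where f = "\<lambda>n x. h x n", OF _ that] by simp
  have [measurable]: "(\<lambda>x. h x (card (arrivals_before (J x) (u x)))) \<in> borel_measurable M"
    by (rule h_at) (unfold arrivals_before_def, measurable)
  have [measurable]: "(\<lambda>x. h x (next_count_value (J x) (u x) m)) \<in> borel_measurable M" for m
    by (rule h_at) (unfold next_count_value_def count_value_below_def arrivals_until_def, measurable)
  have [measurable]: "Measurable.pred M (\<lambda>x. finite (arrivals_before (J x) (u x)))"
    "Measurable.pred M (\<lambda>x. \<exists>q::rat. of_rat q < u x \<and> infinite (arrivals_until (J x) (of_rat q)))"
    unfolding arrivals_before_def arrivals_until_def by measurable
  show ?thesis
    unfolding left_limit_count_def by measurable
qed

lemma measurable_explosion_time:
  assumes [measurable]: "\<And>k. (\<lambda>x. J x k) \<in> borel_measurable M"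
  shows "(\<lambda>x. explosion_time (J x)) \<in> borel_measurable M"
  unfolding explosion_time_def arrivals_until_def by measurable

lemma measurable_xi[measurable]:
  assumes [measurable]: "\<And>n. Measurable.pred M (c n)"
  shows "(\<lambda>\<omega>. xi \<tau> \<mu> N (\<lambda>n. c n \<omega>) i j) \<in> borel_measurable M"
proof (induction i arbitrary: j)
  case (Suc i)
  note [measurable] = Suc
  show ?case
    unfolding xi.simps if_distrib[of "\<lambda>f. f j"] theta_plus_def theta_minus_def by measurable
qed simp

lemma measurable_jump_size_Yproc:
  assumes "N > 0" and [measurable]: "\<And>n. Measurable.pred M (c n)" "\<And>n. \<sigma> n \<in> borel_measurable M"
    "t \<in> borel_measurable M"
  shows "(\<lambda>\<omega>. jump_size (Yproc \<tau> \<mu> N (\<lambda>n. c n \<omega>) (\<lambda>n. \<sigma> n \<omega>)) (t \<omega>)) \<in> borel_measurable M"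
proof -
  have [measurable]: "(\<lambda>\<omega>. Jt (\<lambda>n. \<sigma> n \<omega>) k) \<in> borel_measurable M" for k
    unfolding Jt_def by measurable
  have xi_at: "(\<lambda>\<omega>. scaled_xi \<tau> \<mu> N (\<lambda>n. c n \<omega>) j (g \<omega>)) \<in> borel_measurable M"
    if "g \<in> M \<rightarrow>\<^sub>M count_space UNIV" for j g
    using measurable_compose_countable[where f = "\<lambda>n \<omega>. scaled_xi \<tau> \<mu> N (\<lambda>n. c n \<omega>) j n", OF _ that]
    by (simp add: scaled_xi_def)
  have [measurable]: "(\<lambda>\<omega>. scaled_xi \<tau> \<mu> N (\<lambda>n. c n \<omega>) j (card (arrivals_until (Jt (\<lambda>n. \<sigma> n \<omega>)) (u \<omega>))))
      \<in> borel_measurable M"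
    "(\<lambda>\<omega>. left_limit_count (Jt (\<lambda>n. \<sigma> n \<omega>)) (scaled_xi \<tau> \<mu> N (\<lambda>n. c n \<omega>) j) (u \<omega>))
      \<in> borel_measurable M"
    if [measurable]: "u \<in> borel_measurable M" for j u
  proof -
    show "(\<lambda>\<omega>. scaled_xi \<tau> \<mu> N (\<lambda>n. c n \<omega>) j (card (arrivals_until (Jt (\<lambda>n. \<sigma> n \<omega>)) (u \<omega>))))
      \<in> borel_measurable M"
      by (rule xi_at) (unfold arrivals_until_def, measurable)
    show "(\<lambda>\<omega>. left_limit_count (Jt (\<lambda>n. \<sigma> n \<omega>)) (scaled_xi \<tau> \<mu> N (\<lambda>n. c n \<omega>) j) (u \<omega>))
      \<in> borel_measurable M"
      by (rule measurable_left_limit_count) (auto simp: scaled_xi_def)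
  qed
  show ?thesis
    unfolding jump_size_def Lim_at_left_Yproc[OF assms(1)] Yproc_eq_scaled_xi by measurable
qed

lemma measurable_jump_candidate:
  assumes [measurable]: "\<And>n. \<sigma> n \<in> borel_measurable M"
  shows "(\<lambda>\<omega>. jump_candidate \<tau> N (Jt (\<lambda>n. \<sigma> n \<omega>)) i) \<in> borel_measurable M"
proof -
  have [measurable]: "(\<lambda>\<omega>. Jt (\<lambda>n. \<sigma> n \<omega>) k) \<in> borel_measurable M" for k
    unfolding Jt_def by measurable
  have [measurable]: "(\<lambda>\<omega>. explosion_time (Jt (\<lambda>n. \<sigma> n \<omega>))) \<in> borel_measurable M"
    by (rule measurable_explosion_time) simp
  obtain delayed k where "i = (delayed, k)"
    by (cases i)
  then show ?thesis
    by (cases k) (simp_all add: jump_candidate_def)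
qed

lemma SUP_supported_on_range:
  fixes g :: "real \<Rightarrow> real" and f :: "'i \<Rightarrow> real"
  assumes nonneg: "\<And>t. 0 \<le> g t" and support: "\<And>t. t \<in> A \<Longrightarrow> t \<notin> range f \<Longrightarrow> g t = 0"
    and "A \<noteq> {}"
  shows "(SUP t\<in>A. ereal (g t)) = (SUP i. ereal (if f i \<in> A then g (f i) else 0))"
proof (rule antisym)
  have "0 \<le> (SUP i. ereal (if f i \<in> A then g (f i) else 0))"
    using nonneg by (intro SUP_upper2[of undefined]) auto
  then show "(SUP t\<in>A. ereal (g t)) \<le> (SUP i. ereal (if f i \<in> A then g (f i) else 0))"
  proof (intro SUP_least)
    fix t assume "t \<in> A"
    show "ereal (g t) \<le> (SUP i. ereal (if f i \<in> A then g (f i) else 0))"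
    proof (cases "t \<in> range f")
      case True
      then obtain i where "t = f i"
        by blast
      then show ?thesis
        using \<open>t \<in> A\<close> by (intro SUP_upper2[of i]) auto
    qed (use support \<open>t \<in> A\<close> \<open>0 \<le> (SUP i. _)\<close> in \<open>simp add: zero_ereal_def[symmetric]\<close>)
  qed
  obtain t0 where "t0 \<in> A"
    using \<open>A \<noteq> {}\<close> by blast
  then have "0 \<le> (SUP t\<in>A. ereal (g t))"
    using nonneg by (intro SUP_upper2[of t0]) auto
  then show "(SUP i. ereal (if f i \<in> A then g (f i) else 0)) \<le> (SUP t\<in>A. ereal (g t))"
    by (intro SUP_least) (auto intro: SUP_upper simp: zero_ereal_def[symmetric])
qed

lemma sets_large_jump_event:
  assumes [measurable]: "\<And>n. Measurable.pred M (c n)" "\<And>n. \<sigma> n \<in> borel_measurable M"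
    and "- \<tau> \<le> T"
  shows "{\<omega> \<in> space M. (SUP t\<in>{-\<tau>..T}.
    ereal (jump_size (Yproc \<tau> \<mu> N (\<lambda>n. c n \<omega>) (\<lambda>n. \<sigma> n \<omega>)) t)) > ereal \<epsilon>} \<in> sets M"
proof (cases "N = 0")
  case True
  then have "Yproc \<tau> \<mu> N c' s = (\<lambda>_. 0)" for c' s
    by (auto simp: Yproc_def)
  moreover have "Lim (at_left t) (\<lambda>_::real. 0::real) = 0" for t :: real
    by (rule tendsto_Lim) (auto simp: trivial_limit_at_left_real)
  ultimately show ?thesis
    by (simp add: jump_size_def)
next
  case False
  let ?jump = "\<lambda>\<omega> t. jump_size (Yproc \<tau> \<mu> N (\<lambda>n. c n \<omega>) (\<lambda>n. \<sigma> n \<omega>)) t"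
  let ?cand = "\<lambda>\<omega>. jump_candidate \<tau> N (Jt (\<lambda>n. \<sigma> n \<omega>))"
  have "(SUP t\<in>{-\<tau>..T}. ereal (?jump \<omega> t)) =
      (SUP i. ereal (if ?cand \<omega> i \<in> {-\<tau>..T} then ?jump \<omega> (?cand \<omega> i) else 0))" for \<omega>
  proof (rule SUP_supported_on_range)
    show "0 \<le> ?jump \<omega> t" for t
      by (simp add: jump_size_def)
    show "?jump \<omega> t = 0" if "t \<notin> range (?cand \<omega>)" for t
      using False that by (simp add: jump_size_Yproc_eq_0)
  qed (use \<open>- \<tau> \<le> T\<close> in auto)
  moreover have [measurable]: "(\<lambda>\<omega>. ?cand \<omega> i) \<in> borel_measurable M" for i
    by (rule measurable_jump_candidate) simp
  moreover have [measurable]: "(\<lambda>\<omega>. ?jump \<omega> (?cand \<omega> i)) \<in> borel_measurable M" for i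
    using False by (intro measurable_jump_size_Yproc) auto
  moreover have "(\<lambda>\<omega>. SUP i. ereal (if ?cand \<omega> i \<in> {-\<tau>..T} then ?jump \<omega> (?cand \<omega> i) else 0))
      \<in> borel_measurable M"
    by measurable
  ultimately show ?thesis
    by simp
qed

section \<open>Increments of the chain\<close>

lemma xi_Suc_shift:
  assumes "- int (Lval \<tau> N) \<le> j" "j < 0"
  shows "xi \<tau> \<mu> N c (Suc n) j = xi \<tau> \<mu> N c n (j + 1)"
  using assms by (simp add: theta_plus_def theta_minus_def)

lemma xi_bounds:
  assumes "\<mu> \<ge> 0"
  shows "0 \<le> xi \<tau> \<mu> N c n j \<and> xi \<tau> \<mu> N c n j \<le> \<mu> * real N * (1 + 1 / real N) ^ n"
proof (induction n arbitrary: j)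
  case 0
  then show ?case using assms by simp
next
  case (Suc n)
  define B where "B n = \<mu> * real N * (1 + 1 / real N) ^ n" for n
  have IH: "0 \<le> xi \<tau> \<mu> N c n i" "xi \<tau> \<mu> N c n i \<le> B n" for i
    using Suc by (auto simp: B_def)
  have B_Suc: "B (Suc n) = B n * (1 + 1 / real N)"
    by (simp add: B_def)
  have B_mono: "B n \<le> B (Suc n)"
    unfolding B_Suc using IH(1)[of 0] IH(2)[of 0] by (simp add: mult_le_cancel_left1)
  show ?case
  proof (cases "c n")
    case True
    have "xi \<tau> \<mu> N c n 0 * (1 + 1 / real N) \<le> B (Suc n)"
      unfolding B_Suc using IH(2)[of 0] by (intro mult_right_mono) auto
    then show ?thesis
      using True IH[of "j + 1"] IH[of j] IH[of 0] B_mono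
      by (auto simp: theta_plus_def B_def)
  next
    case False
    define a where "a = xi \<tau> \<mu> N c n (- int (Lval \<tau> N)) / (real N)\<^sup>2"
    have "0 \<le> a"
      unfolding a_def using IH(1) by simp
    then have "xi \<tau> \<mu> N c n 0 * (1 - a) \<le> xi \<tau> \<mu> N c n 0"
      using IH(1)[of 0] by (simp add: mult_left_le)
    then have "max (xi \<tau> \<mu> N c n 0 * (1 - a)) 0 \<le> B (Suc n)"
      using IH[of 0] B_mono by auto
    then show ?thesis
      using False IH[of "j + 1"] IH[of j] B_mono
      by (auto simp: theta_minus_def a_def B_def)
  qed
qed

lemma xi_head_step:
  assumes "\<mu> \<ge> 0"
  shows "\<bar>xi \<tau> \<mu> N c (Suc n) 0 - xi \<tau> \<mu> N c n 0\<bar> \<le>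
    xi \<tau> \<mu> N c n 0 / real N + xi \<tau> \<mu> N c n 0 * xi \<tau> \<mu> N c n (- int (Lval \<tau> N)) / (real N)\<^sup>2"
proof -
  define x where "x = xi \<tau> \<mu> N c n 0"
  define y where "y = xi \<tau> \<mu> N c n (- int (Lval \<tau> N))"
  define a where "a = y / (real N)\<^sup>2"
  have "0 \<le> x" "0 \<le> y"
    unfolding x_def y_def using xi_bounds[OF assms] by auto
  then have "0 \<le> a" "x * y / (real N)\<^sup>2 = x * a"
    by (simp_all add: a_def)
  have minus_step: "\<bar>max (x * (1 - a)) 0 - x\<bar> \<le> x * a"
  proof (cases "x * (1 - a) \<ge> 0")
    case True
    then show ?thesis using \<open>0 \<le> x\<close> \<open>0 \<le> a\<close> by (simp add: max_def algebra_simps)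
  next
    case False
    then have "1 < a"
      using \<open>0 \<le> x\<close> by (metis diff_ge_0_iff_ge mult_nonneg_nonneg not_le)
    then show ?thesis
      using False \<open>0 \<le> x\<close> by (simp add: max_def mult_le_cancel_left1)
  qed
  show ?thesis
  proof (cases "c n")
    case True
    then show ?thesis
      using \<open>0 \<le> x\<close> \<open>0 \<le> a\<close> \<open>x * y / (real N)\<^sup>2 = x * a\<close>
      by (simp add: theta_plus_def x_def[symmetric] y_def[symmetric] algebra_simps)
  next
    case False
    then have "xi \<tau> \<mu> N c (Suc n) 0 = max (x * (1 - a)) 0"
      by (simp add: theta_minus_def x_def y_def a_def)
    moreover have "0 \<le> x / real N"
      using \<open>0 \<le> x\<close> by simp
    ultimately show ?thesis
      using minus_step \<open>x * y / (real N)\<^sup>2 = x * a\<close>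
      unfolding x_def[symmetric] y_def[symmetric] by linarith
  qed
qed

definition increment_bound :: "real \<Rightarrow> nat \<Rightarrow> nat \<Rightarrow> real" where
  "increment_bound \<mu> N m = \<mu> * (1 + 1 / real N) ^ m + (\<mu> * (1 + 1 / real N) ^ m)\<^sup>2"

lemma increment_bound_nonneg: "\<mu> \<ge> 0 \<Longrightarrow> 0 \<le> increment_bound \<mu> N m"
  by (simp add: increment_bound_def)

lemma xi_head_step_le:
  assumes "\<mu> \<ge> 0" "n \<le> m"
  shows "\<bar>xi \<tau> \<mu> N c (Suc n) 0 - xi \<tau> \<mu> N c n 0\<bar> \<le> increment_bound \<mu> N m"
proof -
  define b where "b = \<mu> * (1 + 1 / real N) ^ m"
  define x where "x = xi \<tau> \<mu> N c n 0"
  define y where "y = xi \<tau> \<mu> N c n (- int (Lval \<tau> N))"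
  have "(1 + 1 / real N) ^ n \<le> (1 + 1 / real N) ^ m"
    using assms(2) by (intro power_increasing) auto
  then have "\<mu> * real N * (1 + 1 / real N) ^ n \<le> b * real N"
    unfolding b_def using assms(1) by (simp add: mult_ac mult_left_mono)
  then have "0 \<le> x" "x \<le> b * real N" "0 \<le> y" "y \<le> b * real N"
    unfolding x_def y_def using xi_bounds[OF assms(1), of \<tau> N c n] by (auto intro: order_trans)
  moreover have "0 \<le> b"
    unfolding b_def using assms(1) by simp
  ultimately have "x * y \<le> (b * real N) * (b * real N)" "x / real N \<le> b"
    by (auto intro: mult_mono simp: divide_le_eq)
  then have "x / real N \<le> b" "x * y / (real N)\<^sup>2 \<le> b\<^sup>2"
    using \<open>0 \<le> b\<close> by (auto simp: divide_le_eq power2_eq_square mult_ac)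
  then show ?thesis
    using xi_head_step[OF assms(1), of \<tau> N c n]
    unfolding increment_bound_def b_def[symmetric] x_def[symmetric] y_def[symmetric] by linarith
qed

lemma xi_delayed_coordinate:
  assumes "- int (Lval \<tau> N) \<le> j" "j \<le> 0"
  shows "xi \<tau> \<mu> N c n j =
    (if 0 \<le> int n + j then xi \<tau> \<mu> N c (nat (int n + j)) 0 else \<mu> * real N)"
  using assms
proof (induction n arbitrary: j)
  case 0
  then show ?case by auto
next
  case (Suc n)
  show ?case
  proof (cases "j = 0")
    case False
    then have "xi \<tau> \<mu> N c (Suc n) j = xi \<tau> \<mu> N c n (j + 1)"
      using Suc.prems by (intro xi_Suc_shift) auto
    moreover have "int n + (j + 1) = int (Suc n) + j"
      by simp
    ultimately show ?thesis
      using Suc False by (metis add_le_cancel_left int_one_le_iff_zero_less le_less not_le zle_add1_eq_le)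
  qed (simp del: xi.simps of_nat_Suc)
qed

lemma xi_head_dist_initial:
  assumes "\<mu> \<ge> 0" "k \<le> m"
  shows "\<bar>xi \<tau> \<mu> N c k 0 - \<mu> * real N\<bar> \<le> real k * increment_bound \<mu> N m"
  using assms(2)
proof (induction k)
  case (Suc k)
  have "\<bar>xi \<tau> \<mu> N c (Suc k) 0 - \<mu> * real N\<bar> \<le>
      \<bar>xi \<tau> \<mu> N c (Suc k) 0 - xi \<tau> \<mu> N c k 0\<bar> + \<bar>xi \<tau> \<mu> N c k 0 - \<mu> * real N\<bar>"
    by linarith
  also have "\<dots> \<le> increment_bound \<mu> N m + real k * increment_bound \<mu> N m"
    using Suc xi_head_step_le[OF assms(1), of k m] by (intro add_mono) auto
  finally show ?case
    by (simp add: algebra_simps)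
qed simp

lemma xi_dist_initial:
  assumes "\<mu> \<ge> 0" "n \<le> m" "- int (Lval \<tau> N) \<le> j" "j \<le> 0"
  shows "\<bar>xi \<tau> \<mu> N c n j - \<mu> * real N\<bar> \<le> real (nat (int n + j)) * increment_bound \<mu> N m"
  using xi_delayed_coordinate[OF assms(3,4), of \<mu> c n] assms
    xi_head_dist_initial[OF assms(1), of "nat (int n + j)" m \<tau> N c]
  by (auto simp: increment_bound_nonneg)

lemma xi_step_le:
  assumes "\<mu> \<ge> 0" "n \<le> m" "- int (Lval \<tau> N) \<le> j" "j \<le> 0"
  shows "\<bar>xi \<tau> \<mu> N c (Suc n) j - xi \<tau> \<mu> N c n j\<bar> \<le> increment_bound \<mu> N m"
proof -
  consider "0 \<le> int n + j" | "int n + j = - 1" | "int n + j < - 1"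
    by linarith
  then show ?thesis
  proof cases
    case 1
    then have "nat (int (Suc n) + j) = Suc (nat (int n + j))" "nat (int n + j) \<le> m"
      using assms(2,4) by auto
    then show ?thesis
      using 1 xi_head_step_le[OF assms(1), of "nat (int n + j)" m \<tau> N c]
      by (simp add: xi_delayed_coordinate[OF assms(3,4)] del: xi.simps of_nat_Suc)
  next
    case 2
    then have "int (Suc n) + j = 0"
      by simp
    then show ?thesis
      using 2 assms(1)
      by (simp add: xi_delayed_coordinate[OF assms(3,4)] increment_bound_nonneg del: xi.simps(2) of_nat_Suc)
  next
    case 3
    then show ?thesis
      using assms(1) by (simp add: xi_delayed_coordinate[OF assms(3,4)] increment_bound_nonneg del: xi.simps of_nat_Suc)
  qed
qed

lemma increment_bound_le_exp:
  assumes "\<mu> \<ge> 0" "N > 0" "real m \<le> C * real N"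
  shows "increment_bound \<mu> N m \<le> \<mu> * exp C + (\<mu> * exp C)\<^sup>2"
proof -
  have "(1 + 1 / real N) ^ m \<le> exp (1 / real N) ^ m"
    by (intro power_mono exp_ge_add_one_self) auto
  also have "\<dots> = exp (real m / real N)"
    by (simp add: exp_of_nat_mult[symmetric])
  also have "\<dots> \<le> exp C"
    using assms(2,3) by (simp add: divide_le_eq)
  finally have "\<mu> * (1 + 1 / real N) ^ m \<le> \<mu> * exp C"
    using assms(1) by (rule mult_left_mono)
  then show ?thesis
    unfolding increment_bound_def using assms(1) by (intro add_mono power_mono) auto
qed

section \<open>Jumps of \<open>Y\<close> when all clocks are positive\<close>

lemma strict_mono_Jt:
  assumes "\<And>i. s i > 0"
  shows "strict_mono (Jt s)"
  by (rule strict_monoI_Suc) (simp add: Jt_def assms)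

lemma arrivals_until_Jt_subset:
  assumes "\<And>i. s i > 0" "u < Jt s m"
  shows "arrivals_until (Jt s) u \<subseteq> {1..<m}"
proof
  fix k assume "k \<in> arrivals_until (Jt s) u"
  then have "1 \<le> k" "Jt s k < Jt s m"
    using assms(2) by (auto simp: arrivals_until_def)
  then show "k \<in> {1..<m}"
    using strict_mono_less[OF strict_mono_Jt[OF assms(1)]] by auto
qed

lemma card_arrivals_before_Jt_le:
  assumes "\<And>i. s i > 0" "u < Jt s m"
  shows "card (arrivals_before (Jt s) u) \<le> m - 1"
proof -
  have "arrivals_before (Jt s) u \<subseteq> {1..<m}"
    using arrivals_before_subset_until arrivals_until_Jt_subset[OF assms] by blast
  then show ?thesis
    using card_mono[of "{1..<m}"] by fastforce
qed

lemma card_arrivals_until_le_Suc_before: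
  assumes "inj J" "finite (arrivals_until J u)"
  shows "card (arrivals_until J u) \<le> Suc (card (arrivals_before J u))"
proof -
  have "arrivals_until J u \<subseteq> insert (inv J u) (arrivals_before J u)"
    using assms(1) by (auto simp: arrivals_until_def arrivals_before_def order_le_less)
  then have "card (arrivals_until J u) \<le> card (insert (inv J u) (arrivals_before J u))"
    using assms(2) arrivals_before_subset_until[of J u] finite_subset by (intro card_mono) auto
  also have "\<dots> \<le> Suc (card (arrivals_before J u))"
    using finite_subset[OF arrivals_before_subset_until assms(2)] by (simp add: card_insert_if)
  finally show ?thesis .
qed

lemma scaled_xi_arrival_step_le:
  assumes "\<mu> \<ge> 0" "\<And>i. s i > 0" "u < Jt s m" "- int (Lval \<tau> N) \<le> j" "j \<le> 0"
  shows "\<bar>scaled_xi \<tau> \<mu> N c j (card (arrivals_until (Jt s) u)) -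
      scaled_xi \<tau> \<mu> N c j (card (arrivals_before (Jt s) u))\<bar> \<le> increment_bound \<mu> N m / real N"
proof -
  define a b where "a = card (arrivals_until (Jt s) u)" and "b = card (arrivals_before (Jt s) u)"
  have "finite (arrivals_until (Jt s) u)"
    using arrivals_until_Jt_subset[OF assms(2,3)] finite_subset by blast
  moreover have "inj (Jt s)"
    using strict_mono_Jt[OF assms(2)] by (rule strict_mono_imp_inj_on)
  ultimately have "b \<le> a" "a \<le> Suc b" "a \<le> m - 1"
    using card_mono[OF _ arrivals_before_subset_until] card_arrivals_until_le_Suc_before
      card_mono[OF _ arrivals_until_Jt_subset[OF assms(2,3)]]
    by (auto simp: a_def b_def)
  have "\<bar>xi \<tau> \<mu> N c a j - xi \<tau> \<mu> N c b j\<bar> \<le> increment_bound \<mu> N m"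
  proof (cases "a = b")
    case True
    then show ?thesis
      using increment_bound_nonneg[OF assms(1)] by simp
  next
    case False
    then have "a = Suc b" "b \<le> m"
      using \<open>b \<le> a\<close> \<open>a \<le> Suc b\<close> \<open>a \<le> m - 1\<close> by auto
    then show ?thesis
      using xi_step_le[OF assms(1) _ assms(4,5), of b m c] by (simp del: xi.simps)
  qed
  then show ?thesis
    unfolding a_def b_def scaled_xi_def by (simp add: diff_divide_distrib[symmetric] divide_right_mono)
qed

lemma left_limit_count_Jt:
  assumes "\<And>i. s i > 0" "u < Jt s m"
  shows "left_limit_count (Jt s) h u = h (card (arrivals_before (Jt s) u))"
proof -
  have "finite (arrivals_before (Jt s) u)"
    using arrivals_until_Jt_subset[OF assms] arrivals_before_subset_until finite_subset
    by (metis finite_atLeastLessThan)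
  then show ?thesis
    by (simp add: left_limit_count_def)
qed

lemma jump_size_Yproc_neg_le:
  assumes "\<mu> \<ge> 0" "N > 0" "\<And>i. s i > 0" "t < 0" "real N * t + real N * \<tau> < Jt s m"
  shows "jump_size (Yproc \<tau> \<mu> N c s) t \<le> increment_bound \<mu> N m / real N"
  unfolding jump_size_def Lim_at_left_Yproc[OF assms(2)]
  using assms scaled_xi_arrival_step_le[OF assms(1,3,5), where j = "- int (Lval \<tau> N)"]
  by (simp add: Yproc_eq_scaled_xi left_limit_count_Jt)

lemma jump_size_Yproc_pos_le:
  assumes "\<mu> \<ge> 0" "N > 0" "\<And>i. s i > 0" "t > 0" "real N * t < Jt s m"
  shows "jump_size (Yproc \<tau> \<mu> N c s) t \<le> increment_bound \<mu> N m / real N"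
  unfolding jump_size_def Lim_at_left_Yproc[OF assms(2)]
  using assms scaled_xi_arrival_step_le[OF assms(1,3,5), where j = 0]
  by (simp add: Yproc_eq_scaled_xi left_limit_count_Jt)

text \<open>At \<open>t = 0\<close>, \<open>Y\<close> switches from the delayed coordinate to the current one of the same
  state; they differ by the drift of the chain during the arrivals before time \<open>N \<tau>\<close> in excess of
  \<open>L\<close>.\<close>
lemma jump_size_Yproc_0_le:
  assumes "\<mu> \<ge> 0" "N > 0" and pos: "\<And>i. s i > 0"
    and "real N * \<tau> < Jt s m" and delay: "real N * \<tau> < Jt s (Lval \<tau> N + d + 1)"
  shows "jump_size (Yproc \<tau> \<mu> N c s) 0 \<le> real d * increment_bound \<mu> N m / real N"
proof -
  define n where "n = card (arrivals_before (Jt s) (real N * \<tau>))"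
  have "Jt s 0 < Jt s k" if "1 \<le> k" for k
    using strict_mono_Jt[OF pos] that by (simp add: strict_mono_less)
  then have "arrivals_until (Jt s) 0 = {}"
    by (force simp: arrivals_until_def Jt_def)
  moreover have "\<bar>\<mu> - x / real N\<bar> = \<bar>x - \<mu> * real N\<bar> / real N" for x
  proof -
    have "\<mu> - x / real N = - ((x - \<mu> * real N) / real N)"
      using assms(2) by (simp add: field_simps)
    then show ?thesis
      by (simp add: abs_divide)
  qed
  ultimately have "jump_size (Yproc \<tau> \<mu> N c s) 0 =
      \<bar>xi \<tau> \<mu> N c n (- int (Lval \<tau> N)) - \<mu> * real N\<bar> / real N"
    unfolding jump_size_def Lim_at_left_Yproc[OF assms(2)] using assms(2)
    by (simp add: Yproc_eq_scaled_xi left_limit_count_Jt[OF pos assms(4)] scaled_xi_def n_def)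
  also have "\<dots> \<le> real (nat (int n - int (Lval \<tau> N))) * increment_bound \<mu> N m / real N"
  proof -
    have "n \<le> m"
      using card_arrivals_before_Jt_le[OF pos assms(4)] by (simp add: n_def)
    then show ?thesis
      using xi_dist_initial[OF assms(1) \<open>n \<le> m\<close>, where j = "- int (Lval \<tau> N)" and \<tau> = \<tau>
          and N = N and c = c]
      by (intro divide_right_mono) auto
  qed
  also have "\<dots> \<le> real d * increment_bound \<mu> N m / real N"
  proof -
    have "n \<le> Lval \<tau> N + d"
      using card_arrivals_before_Jt_le[OF pos delay] by (simp add: n_def)
    then have "nat (int n - int (Lval \<tau> N)) \<le> d"
      unfolding nat_le_iff by linarith
    then show ?thesis
      using increment_bound_nonneg[OF assms(1)] by (intro divide_right_mono mult_right_mono) auto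
  qed
  finally show ?thesis .
qed

lemma jump_size_Yproc_le:
  assumes "\<mu> \<ge> 0" "\<tau> \<ge> 0" "N > 0" and pos: "\<And>i. s i > 0"
    and horizon: "real N * (T + \<tau>) < Jt s m"
    and delay: "real N * \<tau> < Jt s (Lval \<tau> N + d + 1)"
    and t: "t \<in> {-\<tau>..T}"
  shows "jump_size (Yproc \<tau> \<mu> N c s) t \<le> increment_bound \<mu> N m * (1 + real d) / real N"
proof -
  let ?D = "increment_bound \<mu> N m"
  have "0 \<le> ?D"
    using assms(1) by (rule increment_bound_nonneg)
  then have "?D / real N \<le> ?D * (1 + real d) / real N" "real d * ?D / real N \<le> ?D * (1 + real d) / real N"
    by (simp_all add: divide_right_mono algebra_simps)
  moreover have "real N * t \<le> real N * T" "0 \<le> real N * \<tau>"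
    using t assms(2) by (simp_all add: mult_left_mono)
  moreover have "real N * T + real N * \<tau> < Jt s m"
    using horizon by (simp add: distrib_left)
  ultimately consider
      "t < 0" "real N * t + real N * \<tau> < Jt s m" "?D / real N \<le> ?D * (1 + real d) / real N"
    | "t = 0" "real N * \<tau> < Jt s m" "real d * ?D / real N \<le> ?D * (1 + real d) / real N"
    | "t > 0" "real N * t < Jt s m" "?D / real N \<le> ?D * (1 + real d) / real N"
    by (cases t "0::real" rule: linorder_cases) auto
  then show ?thesis
  proof cases
    case 1
    from jump_size_Yproc_neg_le[OF assms(1,3) pos 1(1,2)] 1(3) show ?thesis
      by (rule order_trans)
  next
    case 2
    from order_trans[OF jump_size_Yproc_0_le[OF assms(1,3) pos 2(2) delay] 2(3)] 2(1) show ?thesis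
      by simp
  next
    case 3
    from jump_size_Yproc_pos_le[OF assms(1,3) pos 3(1,2)] 3(3) show ?thesis
      by (rule order_trans)
  qed
qed

section \<open>Fair coins and exponential clocks\<close>

locale coin_clock_space = prob_space M
  for M :: "'w measure" and c :: "nat \<Rightarrow> 'w \<Rightarrow> bool" and \<sigma> :: "nat \<Rightarrow> 'w \<Rightarrow> real" +
  assumes indep_coin_clock:
      "indep_vars (\<lambda>_. count_space UNIV \<Otimes>\<^sub>M borel) (\<lambda>n \<omega>. (c n \<omega>, \<sigma> n \<omega>)) UNIV"
    and distr_coin_clock: "\<And>n. distr M (count_space UNIV \<Otimes>\<^sub>M borel) (\<lambda>\<omega>. (c n \<omega>, \<sigma> n \<omega>))
      = measure_pmf (bernoulli_pmf (1/2)) \<Otimes>\<^sub>M density lborel (exponential_density 1)"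
begin

lemma measurable_coin_clock: "(\<lambda>\<omega>. (c n \<omega>, \<sigma> n \<omega>)) \<in> M \<rightarrow>\<^sub>M count_space UNIV \<Otimes>\<^sub>M borel"
  using indep_coin_clock unfolding indep_vars_def by auto

lemma measurable_coin[measurable]: "Measurable.pred M (c n)"
  using measurable_compose[OF measurable_coin_clock measurable_fst] by (simp add: comp_def)

lemma measurable_clock[measurable]: "\<sigma> n \<in> borel_measurable M"
  using measurable_compose[OF measurable_coin_clock measurable_snd] by (simp add: comp_def)

lemma distributed_clock: "distributed M lborel (\<sigma> n) (exponential_density 1)"
proof -
  let ?B = "measure_pmf (bernoulli_pmf (1/2))"
  let ?D = "density lborel (exponential_density 1)"
  interpret D: prob_space ?D
    by (rule prob_space_exponential_density) simp
  have "distr M lborel (\<sigma> n) = distr (distr M (count_space UNIV \<Otimes>\<^sub>M borel) (\<lambda>\<omega>. (c n \<omega>, \<sigma> n \<omega>))) lborel snd"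
    by (subst distr_distr[OF _ measurable_coin_clock]) (simp_all add: comp_def)
  also have "\<dots> = distr (?B \<Otimes>\<^sub>M ?D) lborel snd"
    unfolding distr_coin_clock ..
  also have "\<dots> = ?D"
  proof (rule measure_eqI)
    fix A assume "A \<in> sets (distr (?B \<Otimes>\<^sub>M ?D) lborel snd)"
    then have A: "A \<in> sets borel"
      by simp
    then have "snd -` A \<inter> space (?B \<Otimes>\<^sub>M ?D) = space ?B \<times> A"
      by (auto simp: space_pair_measure dest: sets.sets_into_space)
    then have "emeasure (distr (?B \<Otimes>\<^sub>M ?D) lborel snd) A = emeasure ?B (space ?B) * emeasure ?D A"
      using A by (simp add: emeasure_distr D.emeasure_pair_measure_Times)
    then show "emeasure (distr (?B \<Otimes>\<^sub>M ?D) lborel snd) A = emeasure ?D A"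
      by (simp add: measure_pmf.emeasure_space_1)
  qed simp
  finally show ?thesis
    unfolding distributed_def by auto
qed

lemma AE_clocks_pos: "AE \<omega> in M. \<forall>i. 0 < \<sigma> i \<omega>"
proof -
  have "AE \<omega> in M. 0 < \<sigma> i \<omega>" for i
  proof -
    have "prob {\<omega> \<in> space M. \<sigma> i \<omega> \<le> 0} = 0"
      using exponential_distributedD_le[OF distributed_clock, of 0] by simp
    then have "AE \<omega> in M. \<omega> \<notin> {\<omega> \<in> space M. \<sigma> i \<omega> \<le> 0}"
      by (subst prob_eq_0[symmetric]) auto
    with AE_space show ?thesis
      by eventually_elim auto
  qed
  then show ?thesis
    by (simp add: AE_all_countable)
qed

lemma indep_clocks: "indep_vars (\<lambda>_. borel) \<sigma> UNIV"
  using indep_vars_compose2[OF indep_coin_clock, of "\<lambda>_. snd"] by simp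

lemma distributed_Jt:
  assumes "m \<ge> 1"
  shows "distributed M lborel (\<lambda>\<omega>. Jt (\<lambda>n. \<sigma> n \<omega>) m) (erlang_density (m - 1) 1)"
proof -
  have "distributed M lborel (\<lambda>\<omega>. \<Sum>i<m. \<sigma> i \<omega>) (erlang_density (card {..<m} - 1) 1)"
    using assms by (intro exponential_distributed_sum distributed_clock indep_vars_subset[OF indep_clocks])
      (auto simp: lessThan_empty_iff)
  then show ?thesis
    by (simp add: Jt_def)
qed

lemma prob_Jt_le:
  assumes "m \<ge> 1" "x < real m"
  shows "prob {\<omega> \<in> space M. Jt (\<lambda>n. \<sigma> n \<omega>) m \<le> x} \<le> real m / (real m - x)\<^sup>2"
proof -
  define X where "X \<omega> = Jt (\<lambda>n. \<sigma> n \<omega>) m" for \<omega>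
  have X: "distributed M lborel X (erlang_density (m - 1) 1)"
    unfolding X_def using assms(1) by (rule distributed_Jt)
  have [measurable]: "X \<in> borel_measurable M"
    unfolding X_def Jt_def by measurable
  have "expectation X = real m"
    using erlang_ith_moment[OF _ X, of 1] assms(1) by (cases m) auto
  moreover have "variance X = real m"
    using erlang_distributed_variance[OF _ X] assms(1) by simp
  moreover have "integrable M (\<lambda>\<omega>. X \<omega> ^ 2)"
    using erlang_ith_moment_integrable[OF _ X, of 2] by simp
  ultimately have "prob {\<omega> \<in> space M. real m - x \<le> \<bar>X \<omega> - expectation X\<bar>} \<le> real m / (real m - x)\<^sup>2"
    using Chebyshev_inequality[of X "real m - x"] assms(2) by simp
  moreover have "prob {\<omega> \<in> space M. X \<omega> \<le> x} \<le>
      prob {\<omega> \<in> space M. real m - x \<le> \<bar>X \<omega> - expectation X\<bar>}"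
    using \<open>expectation X = real m\<close> by (intro finite_measure_mono) auto
  ultimately show ?thesis
    unfolding X_def by linarith
qed

end

section \<open>The probability of a large jump\<close>

lemma real_nat_ceiling_less:
  fixes x :: real
  assumes "0 \<le> x"
  shows "real (nat \<lceil>x\<rceil>) < x + 1"
proof -
  have "real (nat \<lceil>x\<rceil>) = of_int \<lceil>x\<rceil>"
    using assms by simp
  then show ?thesis
    by linarith
qed

lemma large_jump_imp_slow_arrivals:
  assumes "\<mu> \<ge> 0" "\<tau> > 0" "N > 0" "\<And>i. s i > 0"
    and small: "increment_bound \<mu> N m * (1 + real d) / real N < \<epsilon>"
    and large: "ereal \<epsilon> < (SUP t\<in>{-\<tau>..T}. ereal (jump_size (Yproc \<tau> \<mu> N c s) t))"
  shows "Jt s m \<le> real N * (T + \<tau>) \<or> Jt s (Lval \<tau> N + d + 1) \<le> real N * \<tau>"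
proof (rule ccontr)
  assume "\<not> ?thesis"
  then have "(SUP t\<in>{-\<tau>..T}. ereal (jump_size (Yproc \<tau> \<mu> N c s) t)) \<le>
      ereal (increment_bound \<mu> N m * (1 + real d) / real N)"
    using assms(1-4) by (intro SUP_least ereal_less_eq(3)[THEN iffD2] jump_size_Yproc_le) auto
  with large have "ereal \<epsilon> < ereal (increment_bound \<mu> N m * (1 + real d) / real N)"
    by (rule less_le_trans)
  with small show False
    by simp
qed

lemma increment_bound_horizon_le:
  assumes "\<mu> \<ge> 0" "h > 0" "N \<ge> 1"
  shows "increment_bound \<mu> N (nat \<lceil>2 * real N * h\<rceil> + 1) \<le> \<mu> * exp (2 * h + 2) + (\<mu> * exp (2 * h + 2))\<^sup>2"
proof (rule increment_bound_le_exp)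
  have "r + 1 \<le> (2 * h + 2) * real N" if "r < 2 * real N * h + 1" for r
    using that assms(3) by (simp add: algebra_simps)
  moreover have "real (nat \<lceil>2 * real N * h\<rceil>) < 2 * real N * h + 1"
    using assms by (intro real_nat_ceiling_less) simp
  ultimately show "real (nat \<lceil>2 * real N * h\<rceil> + 1) \<le> (2 * h + 2) * real N"
    by (simp only: of_nat_add of_nat_1)
qed (use assms in auto)

lemma jump_bound_eventually_small:
  fixes \<mu> h \<epsilon> \<delta> :: real
  assumes "\<mu> \<ge> 0" "h > 0" "\<epsilon> > 0" "\<delta> > 0"
    and small_\<delta>: "\<delta> * (\<mu> * exp (2 * h + 2) + (\<mu> * exp (2 * h + 2))\<^sup>2) \<le> \<epsilon> / 4"
  shows "\<forall>\<^sub>F N in sequentially.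
    increment_bound \<mu> N (nat \<lceil>2 * real N * h\<rceil> + 1) * (1 + real (nat \<lceil>\<delta> * real N\<rceil>)) / real N < \<epsilon>"
proof -
  define G where "G = \<mu> * exp (2 * h + 2) + (\<mu> * exp (2 * h + 2))\<^sup>2"
  have "0 \<le> G"
    unfolding G_def using assms(1) by simp
  have "\<forall>\<^sub>F N in sequentially. 8 * G / \<epsilon> \<le> real N"
    using filterlim_real_sequentially unfolding filterlim_at_top by blast
  with eventually_ge_at_top[of 1] have "\<forall>\<^sub>F N in sequentially. 1 \<le> N \<and> 8 * G / \<epsilon> \<le> real N"
    by (rule eventually_conj)
  then show ?thesis
  proof eventually_elim
    case (elim N)
    have "1 + real (nat \<lceil>\<delta> * real N\<rceil>) \<le> 2 + \<delta> * real N"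
      using real_nat_ceiling_less[of "\<delta> * real N"] assms(4) by simp
    then have "increment_bound \<mu> N (nat \<lceil>2 * real N * h\<rceil> + 1) * (1 + real (nat \<lceil>\<delta> * real N\<rceil>))
        \<le> G * (2 + \<delta> * real N)"
      using increment_bound_horizon_le[OF assms(1,2), of N] elim \<open>0 \<le> G\<close>
      by (intro mult_mono) (auto simp: G_def increment_bound_nonneg assms(1))
    also have "\<dots> = 2 * G + \<delta> * G * real N"
      by (simp add: algebra_simps)
    also have "\<dots> < \<epsilon> * real N"
    proof -
      have "8 * G \<le> \<epsilon> * real N"
        using elim assms(3) by (simp add: divide_le_eq mult.commute)
      moreover have "\<delta> * G * real N \<le> \<epsilon> / 4 * real N"
        using small_\<delta> by (intro mult_right_mono) (simp_all add: G_def)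
      moreover have "0 < \<epsilon> * real N"
        using elim assms(3) by simp
      ultimately show ?thesis
        by linarith
    qed
    finally show ?case
      using elim by (simp add: divide_less_eq)
  qed
qed

context coin_clock_space
begin

lemma prob_Jt_le_scaled:
  assumes "N > 0" "a > 0" "0 \<le> x" "a * real N \<le> real m - x" "real m \<le> b * real N"
  shows "prob {\<omega> \<in> space M. Jt (\<lambda>n. \<sigma> n \<omega>) m \<le> x} \<le> b / (a\<^sup>2 * real N)"
proof -
  have "0 < a * real N"
    using assms(1,2) by simp
  then have "x < real m" "1 \<le> m"
    using assms(3,4) by linarith+
  then have "prob {\<omega> \<in> space M. Jt (\<lambda>n. \<sigma> n \<omega>) m \<le> x} \<le> real m / (real m - x)\<^sup>2"
    by (intro prob_Jt_le)
  also have "\<dots> \<le> (b * real N) / (a * real N)\<^sup>2"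
    using \<open>0 < a * real N\<close> assms(1,4,5) by (intro frac_le power_mono) auto
  also have "\<dots> = b / (a\<^sup>2 * real N)"
    using assms(1) by (simp add: power2_eq_square)
  finally show ?thesis .
qed

lemma prob_Jt_le_horizon:
  assumes "h > 0" "N > 0"
  shows "prob {\<omega> \<in> space M. Jt (\<lambda>n. \<sigma> n \<omega>) (nat \<lceil>2 * real N * h\<rceil> + 1) \<le> real N * h}
    \<le> (2 * h + 2) / (h\<^sup>2 * real N)"
proof (rule prob_Jt_le_scaled)
  have "1 \<le> real N"
    using assms(2) by simp
  then have bounds: "h * real N \<le> r + 1 - real N * h \<and> r + 1 \<le> (2 * h + 2) * real N"
    if "2 * real N * h \<le> r" "r < 2 * real N * h + 1" for r
    using that by (simp add: algebra_simps)
  have lower: "2 * real N * h \<le> real (nat \<lceil>2 * real N * h\<rceil>)"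
    by (rule real_nat_ceiling_ge)
  have upper: "real (nat \<lceil>2 * real N * h\<rceil>) < 2 * real N * h + 1"
    using assms by (intro real_nat_ceiling_less) simp
  from bounds[OF lower upper]
  show "h * real N \<le> real (nat \<lceil>2 * real N * h\<rceil> + 1) - real N * h"
    and "real (nat \<lceil>2 * real N * h\<rceil> + 1) \<le> (2 * h + 2) * real N"
    by (simp_all only: of_nat_add of_nat_1)
qed (use assms in auto)

lemma prob_Jt_le_delay:
  assumes "\<tau> > 0" "\<delta> > 0" "N > 0"
  shows "prob {\<omega> \<in> space M. Jt (\<lambda>n. \<sigma> n \<omega>) (Lval \<tau> N + nat \<lceil>\<delta> * real N\<rceil> + 1) \<le> real N * \<tau>}
    \<le> (\<tau> + \<delta> + 2) / (\<delta>\<^sup>2 * real N)"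
proof (rule prob_Jt_le_scaled)
  have "real N * \<tau> - 1 < real (Lval \<tau> N)" "real (Lval \<tau> N) \<le> real N * \<tau>"
    using assms(1) by (auto simp: Lval_def algebra_simps) linarith+
  then show "\<delta> * real N \<le> real (Lval \<tau> N + nat \<lceil>\<delta> * real N\<rceil> + 1) - real N * \<tau>"
    and "real (Lval \<tau> N + nat \<lceil>\<delta> * real N\<rceil> + 1) \<le> (\<tau> + \<delta> + 2) * real N"
    using assms by (auto simp: algebra_simps) linarith+
qed (use assms in auto)

lemma prob_large_jump_le:
  assumes "\<tau> > 0" "\<mu> \<ge> 0" "T > 0" "\<delta> > 0" "N > 0"
    and small: "increment_bound \<mu> N (nat \<lceil>2 * real N * (T + \<tau>)\<rceil> + 1) *
      (1 + real (nat \<lceil>\<delta> * real N\<rceil>)) / real N < \<epsilon>"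
  shows "prob {\<omega> \<in> space M. (SUP t\<in>{-\<tau>..T}.
      ereal (jump_size (Yproc \<tau> \<mu> N (\<lambda>n. c n \<omega>) (\<lambda>n. \<sigma> n \<omega>)) t)) > ereal \<epsilon>}
    \<le> (2 * (T + \<tau>) + 2) / ((T + \<tau>)\<^sup>2 * real N) + (\<tau> + \<delta> + 2) / (\<delta>\<^sup>2 * real N)"
    (is "prob ?large \<le> _")
proof -
  define late_horizon where "late_horizon = {\<omega> \<in> space M.
    Jt (\<lambda>n. \<sigma> n \<omega>) (nat \<lceil>2 * real N * (T + \<tau>)\<rceil> + 1) \<le> real N * (T + \<tau>)}"
  define late_delay where "late_delay = {\<omega> \<in> space M.
    Jt (\<lambda>n. \<sigma> n \<omega>) (Lval \<tau> N + nat \<lceil>\<delta> * real N\<rceil> + 1) \<le> real N * \<tau>}"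
  have [measurable]: "late_horizon \<in> sets M" "late_delay \<in> sets M"
    unfolding late_horizon_def late_delay_def Jt_def by measurable
  have "AE \<omega> in M. \<omega> \<in> ?large \<longrightarrow> \<omega> \<in> late_horizon \<union> late_delay"
    using AE_clocks_pos
  proof eventually_elim
    case (elim \<omega>)
    then have "\<And>i. 0 < \<sigma> i \<omega>"
      by blast
    from large_jump_imp_slow_arrivals[where s = "\<lambda>n. \<sigma> n \<omega>" and c = "\<lambda>n. c n \<omega>",
        OF assms(2,1,5) this small]
    show ?case
      unfolding late_horizon_def late_delay_def by blast
  qed
  then have "prob ?large \<le> prob (late_horizon \<union> late_delay)"
    by (rule finite_measure_mono_AE) simp
  also have "\<dots> \<le> prob late_horizon + prob late_delay"
    by (rule measure_Un_le) simp_all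
  also have "\<dots> \<le> (2 * (T + \<tau>) + 2) / ((T + \<tau>)\<^sup>2 * real N) + (\<tau> + \<delta> + 2) / (\<delta>\<^sup>2 * real N)"
  proof (rule add_mono)
    show "prob late_horizon \<le> (2 * (T + \<tau>) + 2) / ((T + \<tau>)\<^sup>2 * real N)"
      unfolding late_horizon_def using assms by (intro prob_Jt_le_horizon) auto
    show "prob late_delay \<le> (\<tau> + \<delta> + 2) / (\<delta>\<^sup>2 * real N)"
      unfolding late_delay_def using assms(1,4,5) by (rule prob_Jt_le_delay)
  qed
  finally show ?thesis .
qed

lemma prob_large_jump_tendsto_0:
  assumes "\<tau> > 0" "\<mu> \<ge> 0" "T > 0" "\<epsilon> > 0"
  shows "(\<lambda>N. prob {\<omega> \<in> space M. (SUP t\<in>{-\<tau>..T}.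
    ereal (jump_size (Yproc \<tau> \<mu> N (\<lambda>n. c n \<omega>) (\<lambda>n. \<sigma> n \<omega>)) t)) > ereal \<epsilon>}) \<longlonglongrightarrow> 0"
proof -
  define G where "G = \<mu> * exp (2 * (T + \<tau>) + 2) + (\<mu> * exp (2 * (T + \<tau>) + 2))\<^sup>2"
  define \<delta> where "\<delta> = \<epsilon> / (4 * (G + 1))"
  define K where "K = (2 * (T + \<tau>) + 2) / (T + \<tau>)\<^sup>2 + (\<tau> + \<delta> + 2) / \<delta>\<^sup>2"
  have "0 \<le> G"
    unfolding G_def using assms(2) by simp
  then have "0 < \<delta>" "\<delta> * G \<le> \<epsilon> / 4"
    unfolding \<delta>_def using assms(4) by (auto simp: field_simps)
  then have "\<forall>\<^sub>F N in sequentially. increment_bound \<mu> N (nat \<lceil>2 * real N * (T + \<tau>)\<rceil> + 1) *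
      (1 + real (nat \<lceil>\<delta> * real N\<rceil>)) / real N < \<epsilon>"
    using assms by (intro jump_bound_eventually_small) (auto simp: G_def)
  with eventually_gt_at_top[of 0]
  have "\<forall>\<^sub>F N in sequentially. prob {\<omega> \<in> space M. (SUP t\<in>{-\<tau>..T}.
      ereal (jump_size (Yproc \<tau> \<mu> N (\<lambda>n. c n \<omega>) (\<lambda>n. \<sigma> n \<omega>)) t)) > ereal \<epsilon>} \<le> K / real N"
  proof eventually_elim
    case (elim N)
    then show ?case
      using prob_large_jump_le[OF assms(1-3) \<open>0 < \<delta>\<close>] by (simp add: K_def add_divide_distrib)
  qed
  from tendsto_sandwich[OF _ this tendsto_const lim_const_over_n] show ?thesis
    by simp
qed

end

theorem proposition3p9:
  fixes M :: "'w measure" and c :: "nat \<Rightarrow> 'w \<Rightarrow> bool" and \<sigma> :: "nat \<Rightarrow> 'w \<Rightarrow> real"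
    and \<tau> \<mu> T :: real
  assumes "prob_space M" and "\<tau> > 0" and "\<mu> \<ge> 0"
    and "prob_space.indep_vars M (\<lambda>_. count_space UNIV \<Otimes>\<^sub>M borel)
           (\<lambda>n \<omega>. (c n \<omega>, \<sigma> n \<omega>)) UNIV"
    and "\<And>n. distr M (count_space UNIV \<Otimes>\<^sub>M borel) (\<lambda>\<omega>. (c n \<omega>, \<sigma> n \<omega>))
           = measure_pmf (bernoulli_pmf (1/2)) \<Otimes>\<^sub>M density lborel (exponential_density 1)"
    and "T > 0"
  shows "\<forall>\<epsilon>>0.
    (\<forall>N. {\<omega> \<in> space M. (SUP t\<in>{-\<tau>..T}.
            ereal (jump_size (Yproc \<tau> \<mu> N (\<lambda>n. c n \<omega>) (\<lambda>n. \<sigma> n \<omega>)) t)) > ereal \<epsilon>} \<in> sets M) \<and>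
    ((\<lambda>N. measure M {\<omega> \<in> space M. (SUP t\<in>{-\<tau>..T}.
            ereal (jump_size (Yproc \<tau> \<mu> N (\<lambda>n. c n \<omega>) (\<lambda>n. \<sigma> n \<omega>)) t)) > ereal \<epsilon>})
      \<longlonglongrightarrow> 0)"
proof (intro allI impI conjI)
  fix \<epsilon> :: real
  assume "\<epsilon> > 0"
  interpret coin_clock_space M c \<sigma>
    using assms(1,4,5) by (simp add: coin_clock_space_def coin_clock_space_axioms_def)
  show "{\<omega> \<in> space M. (SUP t\<in>{-\<tau>..T}.
      ereal (jump_size (Yproc \<tau> \<mu> N (\<lambda>n. c n \<omega>) (\<lambda>n. \<sigma> n \<omega>)) t)) > ereal \<epsilon>} \<in> sets M" for N
    using assms(2,6) by (intro sets_large_jump_event measurable_coin measurable_clock) auto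
  show "(\<lambda>N. measure M {\<omega> \<in> space M. (SUP t\<in>{-\<tau>..T}.
      ereal (jump_size (Yproc \<tau> \<mu> N (\<lambda>n. c n \<omega>) (\<lambda>n. \<sigma> n \<omega>)) t)) > ereal \<epsilon>}) \<longlonglongrightarrow> 0"
    using assms(2,3,6) \<open>\<epsilon> > 0\<close> by (rule prob_large_jump_tendsto_0)
qed

end
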